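(* Let $p>1$ and let $f$ be a smooth positive solution of $\frac{\partial f}{\partial t}=\Delta f+f^p$ on $\mathbb{R}^n\times[0,T)$. Let $c$ be a constant satisfying $0<n(p-1)\le c<2$. If at some point $(x_0,t_0)$ $$f(x_0,t_0)\ge\left(\frac{4n}{2-c}\right)^{1/(p-1)},$$ then $f$ blows up in finite time, i.e. $f$ cannot exist as a positive smooth solution on all of $\mathbb{R}^n\times[0,\infty)$, and it becomes unbounded at some finite time.
   Context: $\Delta$ denotes the spatial Laplacian on $\mathbb{R}^n$. *)

theory Defs
  imports "HOL-Analysis.Analysis"
begin

fun iter_dderiv :: "'a::real_normed_vector list \<Rightarrow> ('a \<Rightarrow> real) \<Rightarrow> 'a \<Rightarrow> real" where
  "iter_dderiv [] g = g"
| "iter_dderiv (v # vs) g = (\<lambda>x. deriv (\<lambda>s. iter_dderiv vs g (x + s *\<^sub>R v)) 0)"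

definition smooth_fun_on :: "'a::real_normed_vector set \<Rightarrow> ('a \<Rightarrow> real) \<Rightarrow> bool" where
  "smooth_fun_on S g \<longleftrightarrow>
     (\<forall>vs. continuous_on S (iter_dderiv vs g) \<and>
       (\<forall>v. \<forall>x\<in>S. (\<lambda>s. iter_dderiv vs g (x + s *\<^sub>R v)) differentiable (at 0)))"

definition laplacian :: "(real^'n \<Rightarrow> real) \<Rightarrow> real^'n \<Rightarrow> real" where
  "laplacian u x = (\<Sum>i\<in>UNIV. deriv (deriv (\<lambda>s. u (x + s *\<^sub>R axis i 1))) 0)"

definition global_pos_solution :: "real \<Rightarrow> (real^'n \<Rightarrow> real \<Rightarrow> real) \<Rightarrow> bool" where
  "global_pos_solution p f \<longleftrightarrow>
     smooth_fun_on (UNIV \<times> {0<..}) (\<lambda>(x, t). f x t) \<and>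
     continuous_on (UNIV \<times> {0..}) (\<lambda>(x, t). f x t) \<and>
     (\<forall>x t. t \<ge> 0 \<longrightarrow> f x t > 0) \<and>
     (\<forall>x t. t > 0 \<longrightarrow> deriv (\<lambda>s. f x s) t = laplacian (\<lambda>y. f y t) x + f x t powr p)"

end

theory Submission
  imports Defs
begin

text \<open>Kaplan's test function argument. Let cutoff R x = \<Prod>i. bump (x$i / R), supported in the
  cube of side 2R, and let F t be the cutoff R weighted average of f(\<cdot>, t). Integrating by parts twice
  moves the Laplacian onto the cutoff, where it is bounded below by - (10 n / R^2) cutoff R, and
  Jensen's inequality bounds the average of f^p below by F^p; hence F' \<ge> - (10 n / R^2) F + F^p.
  As f(\<cdot>, 1) is bounded below on the unit cube, F 1 \<ge> \<kappa> / R^n, and (\<kappa> / R^n)^(p - 1) beats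
  10 n / R^2 for large R precisely when n (p - 1) < 2. For such R the differential inequality
  forces F to blow up in finite time.\<close>

section \<open>Real inequalities\<close>

lemma powr_tangent_le:
  fixes p x m :: real
  assumes "1 \<le> p" "0 < x" "0 < m"
  shows "m powr p + p * m powr (p - 1) * (x - m) \<le> x powr p"
proof -
  have "p * m powr (p - 1) * (x - m) \<le> x powr p - m powr p"
  proof (rule convex_on_imp_above_tangent[OF powr_convex[OF assms(1)]])
    show "((\<lambda>x. x powr p) has_real_derivative p * m powr (p - 1)) (at m within {0<..})"
      using assms by (auto intro!: derivative_eq_intros)
  qed (use assms in \<open>auto simp: interior_open\<close>)
  then show ?thesis by simp
qed

lemma linear_differential_inequality:
  fixes H H' :: "real \<Rightarrow> real"
  assumes deriv: "\<And>t. t1 \<le> t \<Longrightarrow> (H has_real_derivative H' t) (at t)"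
    and ineq: "\<And>t. t1 \<le> t \<Longrightarrow> H' t \<le> a * H t" and "t1 \<le> t"
  shows "H t \<le> H t1 * exp (a * (t - t1))"
proof -
  define K where "K s = H s * exp (- a * s)" for s
  have "K t \<le> K t1"
  proof (rule DERIV_nonpos_imp_nonincreasing[OF \<open>t1 \<le> t\<close>])
    fix s assume s: "t1 \<le> s" "s \<le> t"
    have "(K has_real_derivative (H' s - a * H s) * exp (- a * s)) (at s)"
      unfolding K_def[abs_def] using deriv[OF s(1)]
      by (auto intro!: derivative_eq_intros simp: algebra_simps)
    moreover have "(H' s - a * H s) * exp (- a * s) \<le> 0"
      using ineq[OF s(1)] by (simp add: mult_nonpos_nonneg)
    ultimately show "\<exists>y. (K has_real_derivative y) (at s) \<and> y \<le> 0" by blast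
  qed
  then have "K t * exp (a * t) \<le> K t1 * exp (a * t)" by simp
  then show ?thesis
    by (simp add: K_def mult.assoc exp_add[symmetric] algebra_simps)
qed

text \<open>H = F powr (1 - p) - 1 / lam satisfies H' \<le> (p - 1) * lam * H and starts negative, so it
  decreases exponentially, while positivity of F keeps H above - 1 / lam.\<close>

lemma superlinear_differential_inequality_blowup:
  fixes F :: "real \<Rightarrow> real"
  assumes ode: "\<And>t. t1 \<le> t \<Longrightarrow> \<exists>D. (F has_real_derivative D) (at t) \<and> - lam * F t + F t powr p \<le> D"
    and pos: "\<And>t. t1 \<le> t \<Longrightarrow> 0 < F t"
    and "1 < p" and "0 < lam" and start: "lam < F t1 powr (p - 1)"
  shows False
proof -
  obtain F' where deriv: "\<And>t. t1 \<le> t \<Longrightarrow> (F has_real_derivative F' t) (at t)"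
    and ineq: "\<And>t. t1 \<le> t \<Longrightarrow> - lam * F t + F t powr p \<le> F' t"
    using ode by metis
  define H where "H t = F t powr (1 - p) - 1 / lam" for t
  define a where "a = (p - 1) * lam"
  have "0 < a" using \<open>1 < p\<close> \<open>0 < lam\<close> by (simp add: a_def)
  have H_deriv: "(H has_real_derivative (1 - p) * F t powr (- p) * F' t) (at t)" if "t1 \<le> t" for t
    unfolding H_def[abs_def] using deriv[OF that] pos[OF that]
    by (auto intro!: derivative_eq_intros)
  have H_ineq: "(1 - p) * F t powr (- p) * F' t \<le> a * H t" if "t1 \<le> t" for t
  proof -
    have Fp: "0 < F t" by (rule pos[OF that])
    have "F t powr (- p) * (- lam * F t + F t powr p) \<le> F t powr (- p) * F' t"
      using ineq[OF that] by (simp add: mult_left_mono)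
    moreover have "F t powr (- p) * (- lam * F t + F t powr p) = - lam * F t powr (1 - p) + 1"
      using Fp powr_add[of "F t" "- p" 1] powr_add[of "F t" "- p" p] by (simp add: algebra_simps)
    ultimately have "1 - lam * F t powr (1 - p) \<le> F t powr (- p) * F' t" by simp
    from mult_left_mono_neg[OF this, of "1 - p"] \<open>1 < p\<close> \<open>0 < lam\<close> show ?thesis
      by (simp add: a_def H_def algebra_simps)
  qed
  have "H t1 < 0"
  proof -
    have "F t1 powr (1 - p) = inverse (F t1 powr (p - 1))"
      using pos[of t1] by (simp add: powr_minus[symmetric])
    also have "\<dots> < 1 / lam" using start \<open>0 < lam\<close> by (simp add: inverse_eq_divide frac_less2)
    finally show ?thesis by (simp add: H_def)
  qed
  define t where "t = t1 + 1 / (a * lam * (- H t1))"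
  have "0 < a * lam * (- H t1)" using \<open>0 < a\<close> \<open>0 < lam\<close> \<open>H t1 < 0\<close> by (intro mult_pos_pos) auto
  then have "t1 \<le> t" by (simp add: t_def)
  have "- 1 / lam < H t"
    using pos[OF \<open>t1 \<le> t\<close>] \<open>0 < lam\<close> by (simp add: H_def)
  also have "H t \<le> H t1 * exp (a * (t - t1))"
    by (rule linear_differential_inequality[OF H_deriv H_ineq \<open>t1 \<le> t\<close>])
  also have "\<dots> \<le> H t1 * (1 + a * (t - t1))"
    using \<open>H t1 < 0\<close> by (intro mult_left_mono_neg exp_ge_add_one_self) simp
  also have "\<dots> = H t1 - 1 / lam"
    using \<open>0 < a\<close> \<open>0 < lam\<close> \<open>H t1 < 0\<close> by (simp add: t_def field_simps)
  finally show False using \<open>H t1 < 0\<close> by simp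
qed

lemma exists_scale_powr_dominates:
  fixes C \<kappa> a R0 :: real
  assumes "0 < \<kappa>" and "a < 2"
  shows "\<exists>R\<ge>R0. 0 < R \<and> C / R\<^sup>2 < \<kappa> / R powr a"
proof -
  define R where "R = max (max R0 1) ((\<bar>C\<bar> / \<kappa> + 1) powr (1 / (2 - a)))"
  have "0 < R" by (simp add: R_def)
  have "\<bar>C\<bar> / \<kappa> + 1 = ((\<bar>C\<bar> / \<kappa> + 1) powr (1 / (2 - a))) powr (2 - a)"
    using assms by (simp add: powr_powr)
  also have "\<dots> \<le> R powr (2 - a)"
    using assms by (intro powr_mono2) (auto simp: R_def)
  finally have "C < \<kappa> * R powr (2 - a)"
    using assms by (simp add: field_simps)
  moreover have "R\<^sup>2 = R powr a * R powr (2 - a)"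
    using \<open>0 < R\<close> by (simp add: powr_add[symmetric] powr_numeral)
  ultimately have "C / R\<^sup>2 < \<kappa> / R powr a"
    using \<open>0 < R\<close> by (simp add: field_simps)
  moreover have "R0 \<le> R" by (simp add: R_def)
  ultimately show ?thesis using \<open>0 < R\<close> by blast
qed

section \<open>Integrals over cubes\<close>

lemma jensen_powr_integral:
  fixes w g :: "'a::euclidean_space \<Rightarrow> real"
  assumes "1 \<le> p" and w: "\<And>x. x \<in> S \<Longrightarrow> 0 \<le> w x" and g: "\<And>x. x \<in> S \<Longrightarrow> 0 < g x"
    and int: "w integrable_on S" "(\<lambda>x. w x * g x) integrable_on S" "(\<lambda>x. w x * g x powr p) integrable_on S"
    and pos: "0 < integral S w" "0 < integral S (\<lambda>x. w x * g x)"
  shows "integral S w * (integral S (\<lambda>x. w x * g x) / integral S w) powr p \<le> integral S (\<lambda>x. w x * g x powr p)"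
proof -
  define m where "m = integral S (\<lambda>x. w x * g x) / integral S w"
  have "0 < m" using pos by (simp add: m_def)
  define a where "a = m powr p - p * m powr (p - 1) * m"
  define b where "b = p * m powr (p - 1)"
  have int_ab: "(\<lambda>x. a * w x) integrable_on S" "(\<lambda>x. b * (w x * g x)) integrable_on S"
    using integrable_cmul[OF int(1), of a] integrable_cmul[OF int(2), of b] by simp_all
  have "integral S (\<lambda>x. a * w x + b * (w x * g x)) \<le> integral S (\<lambda>x. w x * g x powr p)"
  proof (rule integral_le)
    fix x assume "x \<in> S"
    from mult_left_mono[OF powr_tangent_le[OF \<open>1 \<le> p\<close> g[OF this] \<open>0 < m\<close>] w[OF this]]
    show "a * w x + b * (w x * g x) \<le> w x * g x powr p"
      by (simp add: a_def b_def algebra_simps)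
  qed (use int int_ab in \<open>auto intro: integrable_add\<close>)
  also have "integral S (\<lambda>x. a * w x + b * (w x * g x)) = a * integral S w + b * integral S (\<lambda>x. w x * g x)"
    using int_ab by (simp add: integral_add)
  also have "\<dots> = integral S w * m powr p"
    using pos by (simp add: a_def b_def m_def algebra_simps)
  finally show ?thesis by (simp add: m_def)
qed

lemma compact_continuous_pos_imp_lower_bound:
  fixes g :: "'a::topological_space \<Rightarrow> real"
  assumes "compact K" "K \<noteq> {}" "continuous_on K g" "\<And>x. x \<in> K \<Longrightarrow> 0 < g x"
  obtains \<mu> where "0 < \<mu>" "\<And>x. x \<in> K \<Longrightarrow> \<mu> \<le> g x"
proof -
  obtain x0 where "x0 \<in> K" "\<And>x. x \<in> K \<Longrightarrow> g x0 \<le> g x"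
    using continuous_attains_inf[OF assms(1-3)] by blast
  with assms(4) that show ?thesis by blast
qed

definition cube :: "real \<Rightarrow> (real^'n) set" where
  "cube r = cbox (- (\<chi> i. r)) (\<chi> i. r)"

lemma mem_cube: "x \<in> cube r \<longleftrightarrow> (\<forall>i. \<bar>x $ i\<bar> \<le> r)"
  by (auto simp: cube_def mem_box_cart abs_le_iff) (metis minus_le_iff)+

lemma integral_const_cube: "0 \<le> r \<Longrightarrow> integral (cube r :: (real^'n) set) (\<lambda>x. c) = (2 * r) ^ CARD('n) * c"
proof -
  assume "0 \<le> r"
  then have "cube r \<noteq> ({} :: (real^'n) set)" using mem_cube[of 0 r] by auto
  then show ?thesis by (simp add: cube_def content_cbox_cart)
qed

lemma integrable_on_cube:
  fixes g :: "real^'n \<Rightarrow> real"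
  assumes "continuous_on (cube r) g"
  shows "g integrable_on cube r"
  using assms unfolding cube_def by (rule integrable_continuous)

lemma cube_subset_cube: "r \<le> s \<Longrightarrow> cube r \<subseteq> cube s"
  by (auto simp: mem_cube) (meson order_trans)

lemma integral_cube_ge:
  fixes h :: "real^'n \<Rightarrow> real"
  assumes "continuous_on (cube r) h" and "\<And>x. x \<in> cube r \<Longrightarrow> 0 \<le> h x"
    and "\<And>x. x \<in> cube 1 \<Longrightarrow> c \<le> h x" and "1 \<le> r"
  shows "c * 2 ^ CARD('n) \<le> integral (cube r) h"
proof -
  have sub: "cube 1 \<subseteq> cube r" by (rule cube_subset_cube[OF \<open>1 \<le> r\<close>])
  have "c * 2 ^ CARD('n) = integral (cube 1 :: (real^'n) set) (\<lambda>x. c)"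
    by (simp add: integral_const_cube)
  also have "\<dots> \<le> integral (cube 1) h"
    using assms(1,3) sub by (intro integral_le integrable_on_cube) (auto intro: continuous_on_subset)
  also have "\<dots> \<le> integral (cube r) h"
    using assms(1,2) sub by (intro integral_subset_le integrable_on_cube) (auto intro: continuous_on_subset)
  finally show ?thesis .
qed

lemma has_real_derivative_integral_cube:
  fixes g g' :: "real \<Rightarrow> real^'n \<Rightarrow> real"
  assumes U: "open U" "convex U" "s0 \<in> U"
    and deriv: "\<And>s x. s \<in> U \<Longrightarrow> ((\<lambda>s. g s x) has_real_derivative g' s x) (at s)"
    and cont: "\<And>s. s \<in> U \<Longrightarrow> continuous_on (cube r) (g s)"
    and cont': "continuous_on (U \<times> cube r) (\<lambda>(s, x). g' s x)"
  shows "((\<lambda>s. integral (cube r) (g s)) has_real_derivative integral (cube r) (g' s0)) (at s0)"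
proof -
  have "((\<lambda>s. integral (cube r) (g s)) has_real_derivative integral (cube r) (g' s0)) (at s0 within U)"
    unfolding cube_def
    by (rule leibniz_rule_field_derivative)
       (use U deriv cont cont' in \<open>auto simp: cube_def intro: has_field_derivative_at_within integrable_continuous\<close>)
  then show ?thesis using at_within_open[OF U(3,1)] by simp
qed

lemma integral_translate_support_cube:
  fixes W :: "real^'n \<Rightarrow> real"
  assumes cont: "continuous_on UNIV W" and support: "\<And>x. x \<notin> cube r \<Longrightarrow> W x = 0"
    and "\<bar>s\<bar> < r"
  shows "integral (cube (2 * r)) (\<lambda>x. W (x + s *\<^sub>R axis k 1)) = integral (cube r) W"
proof -
  define e :: "real^'n" where "e = axis k 1"
  have W_integral: "(W has_integral integral (cube r) W) (cube r)"
    unfolding cube_def by (intro integrable_integral integrable_continuous continuous_on_subset[OF cont] subset_UNIV)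
  have "cube r \<subseteq> cbox (- (\<chi> i. 2 * r) + s *\<^sub>R e) ((\<chi> i. 2 * r) + s *\<^sub>R e)"
    using \<open>\<bar>s\<bar> < r\<close> by (auto simp: mem_cube e_def mem_box_cart axis_def abs_le_iff abs_less_iff) (smt (verit))+
  then have "(W has_integral integral (cube r) W) (cbox (- (\<chi> i. 2 * r) + s *\<^sub>R e) ((\<chi> i. 2 * r) + s *\<^sub>R e))"
    by (intro has_integral_on_superset[OF W_integral support])
  then have "((W \<circ> (+) (s *\<^sub>R e)) has_integral integral (cube r) W) (cube (2 * r))"
    by (simp add: cube_def has_integral_shift_cbox_iff)
  then show ?thesis by (simp add: integral_unique o_def add.commute e_def)
qed

text \<open>By the previous lemma the integral of W (x + s e) over cube (2 * r) is constant in s near 0;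
  differentiating under the integral sign at s = 0 gives the claim.\<close>

lemma integral_partial_deriv_eq_0:
  fixes W W' :: "real^'n \<Rightarrow> real"
  assumes cont: "continuous_on UNIV W" "continuous_on UNIV W'"
    and deriv: "\<And>x s. ((\<lambda>s. W (x + s *\<^sub>R axis k 1)) has_real_derivative W' (x + s *\<^sub>R axis k 1)) (at s)"
    and support: "\<And>x. x \<notin> cube r \<Longrightarrow> W x = 0" and "r > 0"
  shows "integral (cube (2 * r)) W' = 0"
proof -
  define e :: "real^'n" where "e = axis k 1"
  define U where "U = {- r<..<r}"
  have "((\<lambda>s. integral (cube (2 * r)) (\<lambda>x. W (x + s *\<^sub>R e))) has_real_derivative
          integral (cube (2 * r)) (\<lambda>x. W' (x + 0 *\<^sub>R e))) (at 0)"
  proof (rule has_real_derivative_integral_cube)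
    show "open U" "convex U" "0 \<in> U" using \<open>r > 0\<close> by (auto simp: U_def)
    show "((\<lambda>s. W (x + s *\<^sub>R e)) has_real_derivative W' (x + s *\<^sub>R e)) (at s)" for s x
      unfolding e_def by (rule deriv)
    show "continuous_on (cube (2 * r)) (\<lambda>x. W (x + s *\<^sub>R e))" for s
      by (rule continuous_on_compose2[OF cont(1)]) (auto intro!: continuous_intros)
    have "continuous_on (U \<times> cube (2 * r)) (\<lambda>p. W' (snd p + fst p *\<^sub>R e))"
      by (rule continuous_on_compose2[OF cont(2)]) (auto intro!: continuous_intros)
    then show "continuous_on (U \<times> cube (2 * r)) (\<lambda>(s, x). W' (x + s *\<^sub>R e))"
      by (simp add: case_prod_beta')
  qed
  then have "((\<lambda>s. integral (cube (2 * r)) (\<lambda>x. W (x + s *\<^sub>R e))) has_real_derivative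
               integral (cube (2 * r)) W') (at 0)"
    by simp
  then have "((\<lambda>s. integral (cube r) W) has_real_derivative integral (cube (2 * r)) W') (at 0)"
  proof (rule has_field_derivative_transform_within_open)
    show "open U" "0 \<in> U" using \<open>r > 0\<close> by (auto simp: U_def)
    show "integral (cube (2 * r)) (\<lambda>x. W (x + s *\<^sub>R e)) = integral (cube r) W" if "s \<in> U" for s
      using that unfolding e_def U_def by (intro integral_translate_support_cube cont(1) support) auto
  qed
  then show ?thesis
    using DERIV_const DERIV_unique by blast
qed

section \<open>A smooth bump function\<close>

lemma has_real_derivative_cutoff_unit_interval:
  fixes P P' :: "real \<Rightarrow> real"
  assumes deriv: "\<And>x. (P has_real_derivative P' x) (at x)"
    and boundary: "\<And>x. \<bar>x\<bar> = 1 \<Longrightarrow> P x = 0 \<and> P' x = 0"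
  shows "((\<lambda>x. if \<bar>x\<bar> < 1 then P x else 0) has_real_derivative (if \<bar>y\<bar> < 1 then P' y else 0)) (at y)"
proof -
  let ?S = "{x::real. \<bar>x\<bar> < 1}" and ?T = "{x::real. \<not> \<bar>x\<bar> < 1}"
  have closure_S: "closure ?S = {-1..1}"
  proof -
    have "?S = {-1<..<1}" by auto
    then show ?thesis by simp
  qed
  have closure_T: "closure ?T = ?T"
    unfolding not_less by (intro closure_closed closed_Collect_le continuous_intros)
  have "((\<lambda>x. if x \<in> ?S then P x else 0) has_derivative
      (if y \<in> ?S then (\<lambda>h. P' y * h) else (\<lambda>h. 0 * h))) (at y within ?S \<union> ?T)"
    by (rule has_derivative_If_within_closures)
       (use deriv boundary closure_S closure_T in \<open>auto intro: has_derivative_at_withinI simp: has_field_derivative_def\<close>)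
  moreover have "?S \<union> ?T = UNIV" by blast
  ultimately show ?thesis
    by (cases "\<bar>y\<bar> < 1") (simp_all add: has_field_derivative_def)
qed

definition bump :: "real \<Rightarrow> real" where
  "bump y = (if \<bar>y\<bar> < 1 then (1 - y\<^sup>2) ^ 3 else 0)"

definition bump_deriv :: "real \<Rightarrow> real" where
  "bump_deriv y = (if \<bar>y\<bar> < 1 then - 6 * y * (1 - y\<^sup>2) ^ 2 else 0)"

definition bump_deriv2 :: "real \<Rightarrow> real" where
  "bump_deriv2 y = (if \<bar>y\<bar> < 1 then (1 - y\<^sup>2) * (30 * y\<^sup>2 - 6) else 0)"

lemma abs_eq_1_imp_square: "\<bar>y::real\<bar> = 1 \<Longrightarrow> y\<^sup>2 = 1"
  by (metis abs_power2 one_power2 power2_abs)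

lemma has_real_derivative_bump: "(bump has_real_derivative bump_deriv y) (at y)"
  unfolding bump_def[abs_def] bump_deriv_def
proof (rule has_real_derivative_cutoff_unit_interval)
  show "((\<lambda>y. (1 - y\<^sup>2) ^ 3) has_real_derivative - 6 * x * (1 - x\<^sup>2) ^ 2) (at x)" for x
    by (auto intro!: derivative_eq_intros simp: algebra_simps power2_eq_square)
qed (simp add: abs_eq_1_imp_square)

lemma has_real_derivative_bump_deriv: "(bump_deriv has_real_derivative bump_deriv2 y) (at y)"
  unfolding bump_deriv_def[abs_def] bump_deriv2_def
proof (rule has_real_derivative_cutoff_unit_interval)
  show "((\<lambda>y. - 6 * y * (1 - y\<^sup>2) ^ 2) has_real_derivative (1 - x\<^sup>2) * (30 * x\<^sup>2 - 6)) (at x)" for x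
    by (auto intro!: derivative_eq_intros simp: algebra_simps power2_eq_square)
qed (simp add: abs_eq_1_imp_square)

lemma continuous_on_bump: "continuous_on A bump"
  using has_real_derivative_bump by (meson DERIV_isCont continuous_at_imp_continuous_on)

lemma continuous_on_bump_deriv: "continuous_on A bump_deriv"
  using has_real_derivative_bump_deriv by (meson DERIV_isCont continuous_at_imp_continuous_on)

lemma continuous_on_bump_deriv2: "continuous_on A bump_deriv2"
proof -
  have eq: "bump_deriv2 = (\<lambda>y. max 0 (1 - y\<^sup>2) * (30 * y\<^sup>2 - 6))"
    by (auto simp: fun_eq_iff bump_deriv2_def abs_square_less_1[symmetric])
  show ?thesis unfolding eq by (intro continuous_intros)
qed

lemma bump_nonneg: "0 \<le> bump y"
  by (simp add: bump_def abs_square_less_1[symmetric])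

lemma bump_le_1: "bump y \<le> 1"
  by (auto simp: bump_def abs_square_less_1[symmetric] intro!: power_le_one)

lemma bump_ge_27_64: "\<bar>y\<bar> \<le> 1/2 \<Longrightarrow> 27/64 \<le> bump y"
proof -
  assume "\<bar>y\<bar> \<le> 1/2"
  then have "y\<^sup>2 \<le> (1/2)\<^sup>2" using power_mono[of "\<bar>y\<bar>" "1/2" 2] by simp
  then have "y\<^sup>2 \<le> 1/4" by (simp add: power2_eq_square)
  then have "(3/4::real) ^ 3 \<le> (1 - y\<^sup>2) ^ 3" by (intro power_mono) auto
  with \<open>\<bar>y\<bar> \<le> 1/2\<close> show ?thesis by (simp add: bump_def power_divide)
qed

lemma bump_deriv2_ge: "- 10 * bump y \<le> bump_deriv2 y"
proof (cases "\<bar>y\<bar> < 1")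
  case True
  then have "y\<^sup>2 < 1" by (simp add: abs_square_less_1)
  then have "0 \<le> (1 - y\<^sup>2) * (4 + 10 * y\<^sup>2 + 10 * y\<^sup>2 * y\<^sup>2)"
    by (intro mult_nonneg_nonneg) auto
  with True show ?thesis
    by (simp add: bump_def bump_deriv2_def algebra_simps power2_eq_square power3_eq_cube)
qed (simp add: bump_def bump_deriv2_def)

section \<open>The cutoff function\<close>

definition cutoff :: "real \<Rightarrow> real^'n \<Rightarrow> real" where
  "cutoff R x = (\<Prod>i\<in>UNIV. bump (x $ i / R))"

text \<open>With h = bump_deriv and h = bump_deriv2, divided by R and R^2 respectively, these are the
  first and second partial derivatives of cutoff R in direction k.\<close>

definition cutoff_with :: "(real \<Rightarrow> real) \<Rightarrow> real \<Rightarrow> 'n \<Rightarrow> real^'n \<Rightarrow> real" where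
  "cutoff_with h R k x = h (x $ k / R) * (\<Prod>i\<in>UNIV - {k}. bump (x $ i / R))"

lemma cutoff_eq_cutoff_with: "cutoff R = cutoff_with bump R k"
  by (simp add: fun_eq_iff cutoff_def cutoff_with_def prod.remove[of UNIV k])

lemma has_real_derivative_cutoff_with:
  assumes "\<And>y. (h has_real_derivative h' y) (at y)" and "R > 0"
  shows "((\<lambda>s. cutoff_with h R k (x + s *\<^sub>R axis k 1)) has_real_derivative
           cutoff_with h' R k (x + s0 *\<^sub>R axis k 1) / R) (at s0)"
proof -
  have other: "(\<Prod>i\<in>UNIV - {k}. bump ((x + s *\<^sub>R axis k 1) $ i / R)) = (\<Prod>i\<in>UNIV - {k}. bump (x $ i / R))" for s
    by (intro prod.cong) (auto simp: axis_def)
  have "((\<lambda>s. (x $ k + s) / R) has_real_derivative 1 / R) (at s0)"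
    using assms(2) by (auto intro!: derivative_eq_intros)
  from DERIV_chain2[OF assms(1) this]
  have "((\<lambda>s. h ((x $ k + s) / R) * (\<Prod>i\<in>UNIV - {k}. bump (x $ i / R))) has_real_derivative
          h' ((x $ k + s0) / R) / R * (\<Prod>i\<in>UNIV - {k}. bump (x $ i / R))) (at s0)"
    by (intro DERIV_cmult_right) simp
  then show ?thesis
    by (simp add: cutoff_with_def other axis_def)
qed

lemma continuous_on_cutoff_with:
  assumes "continuous_on UNIV h"
  shows "continuous_on A (cutoff_with h R k)"
proof -
  have "continuous_on A (\<lambda>x. g (x $ i / R))" if "continuous_on UNIV g" for g :: "real \<Rightarrow> real" and i
    by (rule continuous_on_compose2[OF that]) (auto simp: divide_inverse intro!: continuous_intros)
  with assms continuous_on_bump show ?thesis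
    unfolding cutoff_with_def by (intro continuous_on_mult continuous_on_prod) auto
qed

lemma cutoff_with_eq_0:
  assumes "\<And>y. \<not> \<bar>y\<bar> < 1 \<Longrightarrow> h y = 0" and "R > 0" and "x \<notin> cube R"
  shows "cutoff_with h R k x = 0"
proof -
  obtain i where "\<not> \<bar>x $ i\<bar> \<le> R" using assms(3) by (auto simp: mem_cube)
  then have out: "\<not> \<bar>x $ i / R\<bar> < 1" using assms(2) by (simp add: abs_divide)
  have "h (x $ i / R) = 0" by (rule assms(1)[OF out])
  have "bump (x $ i / R) = 0" using out by (simp add: bump_def)
  show ?thesis
  proof (cases "i = k")
    case False
    then have "(\<Prod>j\<in>UNIV - {k}. bump (x $ j / R)) = 0"
      using \<open>bump (x $ i / R) = 0\<close> by (intro prod_zero) auto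
    then show ?thesis by (simp add: cutoff_with_def)
  qed (use \<open>h (x $ i / R) = 0\<close> in \<open>simp add: cutoff_with_def\<close>)
qed

lemma continuous_on_cutoff: "continuous_on A (cutoff R :: real^'n \<Rightarrow> real)"
proof -
  fix k :: 'n
  show ?thesis
    using continuous_on_cutoff_with[OF continuous_on_bump, of A R k] by (simp only: cutoff_eq_cutoff_with[of R k])
qed

lemma cutoff_nonneg: "0 \<le> cutoff R x"
  unfolding cutoff_def by (intro prod_nonneg) (simp add: bump_nonneg)

lemma cutoff_le_1: "cutoff R x \<le> 1"
  unfolding cutoff_def by (intro prod_le_1) (simp add: bump_nonneg bump_le_1)

lemma cutoff_ge_on_unit_cube:
  assumes "R \<ge> 2" and "x \<in> cube 1"
  shows "(27/64) ^ CARD('n) \<le> cutoff R (x :: real^'n)"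
proof -
  have "27/64 \<le> bump (x $ i / R)" for i
  proof (rule bump_ge_27_64)
    have "\<bar>x $ i\<bar> \<le> 1" using assms(2) by (simp add: mem_cube)
    with assms(1) show "\<bar>x $ i / R\<bar> \<le> 1/2" by (simp add: abs_divide)
  qed
  then have "(\<Prod>i\<in>(UNIV::'n set). 27/64) \<le> cutoff R x"
    unfolding cutoff_def by (intro prod_mono) auto
  then show ?thesis by simp
qed

lemma sum_cutoff_with_deriv2_ge:
  "- 10 * real CARD('n) * cutoff R x \<le> (\<Sum>k\<in>UNIV. cutoff_with bump_deriv2 R k (x :: real^'n))"
proof -
  have "- 10 * cutoff R x \<le> cutoff_with bump_deriv2 R k x" for k
  proof -
    have "0 \<le> (\<Prod>i\<in>UNIV - {k}. bump (x $ i / R))" by (simp add: prod_nonneg bump_nonneg)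
    from mult_right_mono[OF bump_deriv2_ge[of "x $ k / R"] this] show ?thesis
      by (simp add: cutoff_eq_cutoff_with[of R k] cutoff_with_def mult.assoc)
  qed
  then have "(\<Sum>k\<in>(UNIV::'n set). - 10 * cutoff R x) \<le> (\<Sum>k\<in>UNIV. cutoff_with bump_deriv2 R k x)"
    by (intro sum_mono)
  then show ?thesis by simp
qed

lemma integral_cutoff_le: "0 \<le> R \<Longrightarrow> integral (cube (2 * R)) (cutoff R :: real^'n \<Rightarrow> real) \<le> (4 * R) ^ CARD('n)"
proof -
  assume "0 \<le> R"
  have "integral (cube (2 * R)) (cutoff R :: real^'n \<Rightarrow> real) \<le> integral (cube (2 * R)) (\<lambda>x::real^'n. 1)"
    by (intro integral_le integrable_on_cube continuous_on_cutoff continuous_on_const) (simp add: cutoff_le_1)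
  also have "\<dots> = (4 * R) ^ CARD('n)"
    using \<open>0 \<le> R\<close> by (simp add: integral_const_cube power_mult_distrib)
  finally show ?thesis .
qed

lemma integral_cutoff_mult_pos:
  fixes g :: "real^'n \<Rightarrow> real"
  assumes "continuous_on (cube (2 * R)) g" and "\<And>x. x \<in> cube (2 * R) \<Longrightarrow> 0 < g x" and "2 \<le> R"
  shows "0 < integral (cube (2 * R)) (\<lambda>x. cutoff R x * g x)"
proof -
  have sub: "cube 1 \<subseteq> cube (2 * R)" using \<open>2 \<le> R\<close> by (intro cube_subset_cube) simp
  have "cube 1 \<noteq> ({} :: (real^'n) set)" using mem_cube[of "0 :: real^'n" 1] by auto
  then obtain \<mu> where "0 < \<mu>" and \<mu>: "\<And>x. x \<in> cube 1 \<Longrightarrow> \<mu> \<le> g x"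
    using compact_continuous_pos_imp_lower_bound[of "cube 1" g] assms(1,2) sub
    by (auto simp: cube_def intro: continuous_on_subset)
  have "(27/64) ^ CARD('n) * \<mu> * 2 ^ CARD('n) \<le> integral (cube (2 * R)) (\<lambda>x. cutoff R x * g x)"
  proof (rule integral_cube_ge)
    show "(27/64) ^ CARD('n) * \<mu> \<le> cutoff R x * g x" if "x \<in> cube 1" for x
      using cutoff_ge_on_unit_cube[OF \<open>2 \<le> R\<close> that] \<mu>[OF that] \<open>0 < \<mu>\<close> cutoff_nonneg
      by (intro mult_mono) auto
    show "0 \<le> cutoff R x * g x" if "x \<in> cube (2 * R)" for x
      using assms(2)[OF that] cutoff_nonneg[of R x] by simp
  qed (use assms in \<open>auto intro!: continuous_intros continuous_on_cutoff\<close>)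
  moreover have "0 < (27/64) ^ CARD('n) * \<mu> * (2::real) ^ CARD('n)" using \<open>0 < \<mu>\<close> by simp
  ultimately show ?thesis by linarith
qed

lemma integral_cutoff_pos: "2 \<le> R \<Longrightarrow> 0 < integral (cube (2 * R)) (cutoff R :: real^'n \<Rightarrow> real)"
  using integral_cutoff_mult_pos[of R "\<lambda>x::real^'n. 1"] by simp

section \<open>Derivatives of smooth space-time functions\<close>

lemma has_real_derivative_iter_dderiv:
  assumes "smooth_fun_on S g" and "y + s0 *\<^sub>R v \<in> S"
  shows "((\<lambda>s. iter_dderiv vs g (y + s *\<^sub>R v)) has_real_derivative iter_dderiv (v # vs) g (y + s0 *\<^sub>R v)) (at s0)"
proof -
  define z where "z = y + s0 *\<^sub>R v"
  have "(\<lambda>s. iter_dderiv vs g (z + s *\<^sub>R v)) differentiable (at 0)"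
    using assms unfolding smooth_fun_on_def z_def by blast
  then have "((\<lambda>s. iter_dderiv vs g (z + s *\<^sub>R v)) has_real_derivative iter_dderiv (v # vs) g z) (at 0)"
    by (simp add: DERIV_deriv_iff_real_differentiable)
  moreover have "(\<lambda>s. iter_dderiv vs g (y + (s + s0) *\<^sub>R v)) = (\<lambda>s. iter_dderiv vs g (z + s *\<^sub>R v))"
    by (simp add: z_def algebra_simps scaleR_add_left)
  ultimately show ?thesis
    using DERIV_shift[of "\<lambda>s. iter_dderiv vs g (y + s *\<^sub>R v)" _ 0 s0] by (simp add: z_def)
qed

definition time_deriv :: "(real^'n \<Rightarrow> real \<Rightarrow> real) \<Rightarrow> real^'n \<Rightarrow> real \<Rightarrow> real" where
  "time_deriv f x t = iter_dderiv [(0, 1)] (\<lambda>(x, t). f x t) (x, t)"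

definition space_deriv :: "(real^'n \<Rightarrow> real \<Rightarrow> real) \<Rightarrow> 'n \<Rightarrow> real^'n \<Rightarrow> real \<Rightarrow> real" where
  "space_deriv f k x t = iter_dderiv [(axis k 1, 0)] (\<lambda>(x, t). f x t) (x, t)"

definition space_deriv2 :: "(real^'n \<Rightarrow> real \<Rightarrow> real) \<Rightarrow> 'n \<Rightarrow> real^'n \<Rightarrow> real \<Rightarrow> real" where
  "space_deriv2 f k x t = iter_dderiv [(axis k 1, 0), (axis k 1, 0)] (\<lambda>(x, t). f x t) (x, t)"

context
  fixes f :: "real^'n \<Rightarrow> real \<Rightarrow> real"
  assumes smooth: "smooth_fun_on (UNIV \<times> {0<..}) (\<lambda>(x, t). f x t)"
begin

lemma has_real_derivative_time: "t > 0 \<Longrightarrow> ((\<lambda>s. f x s) has_real_derivative time_deriv f x t) (at t)"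
  using has_real_derivative_iter_dderiv[OF smooth, of "(x, 0)" t "(0, 1)" "[]"]
  by (simp add: time_deriv_def)

lemma has_real_derivative_space:
  "t > 0 \<Longrightarrow> ((\<lambda>s. f (x + s *\<^sub>R axis k 1) t) has_real_derivative space_deriv f k (x + s0 *\<^sub>R axis k 1) t) (at s0)"
  using has_real_derivative_iter_dderiv[OF smooth, of "(x, t)" s0 "(axis k 1, 0)" "[]"]
  by (simp add: space_deriv_def)

lemma has_real_derivative_space_deriv:
  "t > 0 \<Longrightarrow> ((\<lambda>s. space_deriv f k (x + s *\<^sub>R axis k 1) t) has_real_derivative space_deriv2 f k (x + s0 *\<^sub>R axis k 1) t) (at s0)"
  using has_real_derivative_iter_dderiv[OF smooth, of "(x, t)" s0 "(axis k 1, 0)" "[(axis k 1, 0)]"]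
  by (simp add: space_deriv_def space_deriv2_def)

lemma continuous_on_iter_dderiv_slice:
  assumes "t > 0"
  shows "continuous_on A (\<lambda>x. iter_dderiv vs (\<lambda>(x, t). f x t) (x, t))"
proof -
  have "continuous_on (UNIV \<times> {0<..}) (iter_dderiv vs (\<lambda>(x, t). f x t))"
    using smooth unfolding smooth_fun_on_def by blast
  then show ?thesis
    by (rule continuous_on_compose2) (use assms in \<open>auto intro!: continuous_intros\<close>)
qed

lemma continuous_on_space_deriv: "t > 0 \<Longrightarrow> continuous_on A (\<lambda>x. space_deriv f k x t)"
  unfolding space_deriv_def by (rule continuous_on_iter_dderiv_slice)

lemma continuous_on_space_deriv2: "t > 0 \<Longrightarrow> continuous_on A (\<lambda>x. space_deriv2 f k x t)"
  unfolding space_deriv2_def by (rule continuous_on_iter_dderiv_slice)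

lemma continuous_on_time_deriv: "continuous_on (UNIV \<times> {0<..}) (\<lambda>(x, t). time_deriv f x t)"
proof -
  have "continuous_on (UNIV \<times> {0<..}) (iter_dderiv [(0, 1)] (\<lambda>(x, t). f x t))"
    using smooth unfolding smooth_fun_on_def by blast
  then show ?thesis unfolding time_deriv_def by (simp only: case_prod_eta)
qed

lemma laplacian_eq_sum_space_deriv2: "t > 0 \<Longrightarrow> laplacian (\<lambda>y. f y t) x = (\<Sum>k\<in>UNIV. space_deriv2 f k x t)"
  unfolding laplacian_def
proof (rule sum.cong[OF refl])
  fix k assume "t > 0"
  have "deriv (\<lambda>s. f (x + s *\<^sub>R axis k 1) t) = (\<lambda>s. space_deriv f k (x + s *\<^sub>R axis k 1) t)"
    using has_real_derivative_space[OF \<open>t > 0\<close>] by (intro ext DERIV_imp_deriv)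
  with has_real_derivative_space_deriv[OF \<open>t > 0\<close>, of k x 0]
  show "deriv (deriv (\<lambda>s. f (x + s *\<^sub>R axis k 1) t)) 0 = space_deriv2 f k x t"
    by (simp add: DERIV_imp_deriv)
qed

lemma continuous_on_slice: "t > 0 \<Longrightarrow> continuous_on A (\<lambda>x. f x t)"
  using continuous_on_iter_dderiv_slice[of t A "[]"] by simp

lemma integral_cutoff_space_deriv2:
  assumes "t > 0" and "R > 0"
  shows "integral (cube (2 * R)) (\<lambda>x. cutoff R x * space_deriv2 f k x t)
           = integral (cube (2 * R)) (\<lambda>x. f x t * cutoff_with bump_deriv2 R k x) / R\<^sup>2"
proof -
  \<comment> \<open>the derivative of W along the k-th axis is W'; this is integration by parts twice\<close>
  define W where "W x = cutoff R x * space_deriv f k x t - f x t * (cutoff_with bump_deriv R k x / R)" for x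
  define W' where "W' x = cutoff R x * space_deriv2 f k x t - f x t * cutoff_with bump_deriv2 R k x / R\<^sup>2" for x
  note cont = continuous_on_cutoff continuous_on_cutoff_with[OF continuous_on_bump_deriv]
    continuous_on_cutoff_with[OF continuous_on_bump_deriv2] continuous_on_slice[OF \<open>t > 0\<close>]
    continuous_on_space_deriv[OF \<open>t > 0\<close>] continuous_on_space_deriv2[OF \<open>t > 0\<close>]
  have "integral (cube (2 * R)) W' = 0"
  proof (rule integral_partial_deriv_eq_0[of W W' k R])
    show "continuous_on UNIV W" "continuous_on UNIV W'"
      unfolding W_def[abs_def] W'_def[abs_def] using \<open>R > 0\<close> by (auto intro!: continuous_intros cont)
    show "((\<lambda>s. W (x + s *\<^sub>R axis k 1)) has_real_derivative W' (x + s *\<^sub>R axis k 1)) (at s)" for x s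
    proof -
      note d = has_real_derivative_cutoff_with[OF has_real_derivative_bump \<open>R > 0\<close>, of k x s, folded cutoff_eq_cutoff_with]
        has_real_derivative_cutoff_with[OF has_real_derivative_bump_deriv \<open>R > 0\<close>, of k x s]
        has_real_derivative_space[OF \<open>t > 0\<close>, of x k s] has_real_derivative_space_deriv[OF \<open>t > 0\<close>, of k x s]
      show ?thesis
        unfolding W_def
        by (rule DERIV_cong[OF DERIV_diff[OF DERIV_mult[OF d(1) d(4)] DERIV_mult[OF d(3) DERIV_cdivide[OF d(2)]]]])
           (simp add: W'_def power2_eq_square algebra_simps)
    qed
    show "W x = 0" if "x \<notin> cube R" for x
      using cutoff_with_eq_0[OF _ \<open>R > 0\<close> that, of bump k] cutoff_with_eq_0[OF _ \<open>R > 0\<close> that, of bump_deriv k]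
      by (simp add: W_def cutoff_eq_cutoff_with[of R k] bump_def bump_deriv_def)
  qed (fact \<open>R > 0\<close>)
  moreover have "integral (cube (2 * R)) W' = integral (cube (2 * R)) (\<lambda>x. cutoff R x * space_deriv2 f k x t)
      - integral (cube (2 * R)) (\<lambda>x. f x t * cutoff_with bump_deriv2 R k x) / R\<^sup>2"
    unfolding W'_def
    using \<open>R > 0\<close> by (subst integral_diff) (auto intro!: integrable_on_cube continuous_intros cont)
  ultimately show ?thesis by simp
qed

lemma has_real_derivative_integral_cutoff:
  assumes "t > 0"
  shows "((\<lambda>s. integral (cube r) (\<lambda>x. cutoff R x * f x s)) has_real_derivative
           integral (cube r) (\<lambda>x. cutoff R x * time_deriv f x t)) (at t)"
proof (rule has_real_derivative_integral_cube)
  show "open {0::real<..}" "convex {0::real<..}" "t \<in> {0<..}" using assms by auto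
  show "((\<lambda>s. cutoff R x * f x s) has_real_derivative cutoff R x * time_deriv f x s) (at s)"
    if "s \<in> {0<..}" for s x
    using that by (intro DERIV_cmult has_real_derivative_time) simp
  show "continuous_on (cube r) (\<lambda>x. cutoff R x * f x s)" if "s \<in> {0<..}" for s
    using that by (intro continuous_intros continuous_on_cutoff continuous_on_slice) simp
  have "continuous_on ({0<..} \<times> cube r) (\<lambda>p. cutoff R (snd p) * (\<lambda>(x, t). time_deriv f x t) (snd p, fst p))"
    by (intro continuous_intros continuous_on_compose2[OF continuous_on_cutoff]
        continuous_on_compose2[OF continuous_on_time_deriv]) auto
  then show "continuous_on ({0<..} \<times> cube r) (\<lambda>(s, x). cutoff R x * time_deriv f x s)"
    by (simp add: case_prod_beta')
qed

end

section \<open>The cutoff average of a solution\<close>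

definition cutoff_average :: "real \<Rightarrow> (real^'n \<Rightarrow> real) \<Rightarrow> real" where
  "cutoff_average R g = integral (cube (2 * R)) (\<lambda>x. cutoff R x * g x) / integral (cube (2 * R)) (cutoff R :: real^'n \<Rightarrow> real)"

lemma cutoff_average_ge:
  fixes g :: "real^'n \<Rightarrow> real"
  assumes "continuous_on (cube (2 * R)) g" and "\<And>x. x \<in> cube (2 * R) \<Longrightarrow> 0 \<le> g x"
    and "\<And>x. x \<in> cube 1 \<Longrightarrow> \<mu> \<le> g x" and "0 \<le> \<mu>" and "2 \<le> R"
  shows "\<mu> * (27/128) ^ CARD('n) / R ^ CARD('n) \<le> cutoff_average R g"
proof -
  define I where "I = integral (cube (2 * R)) (\<lambda>x. cutoff R x * g x)"
  define Z where "Z = integral (cube (2 * R)) (cutoff R :: real^'n \<Rightarrow> real)"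
  have "0 < Z" unfolding Z_def using \<open>2 \<le> R\<close> by (rule integral_cutoff_pos)
  have "Z \<le> (4 * R) ^ CARD('n)" unfolding Z_def using \<open>2 \<le> R\<close> by (intro integral_cutoff_le) simp
  have I_ge: "(27/64) ^ CARD('n) * \<mu> * 2 ^ CARD('n) \<le> I"
    unfolding I_def
  proof (rule integral_cube_ge)
    show "(27/64) ^ CARD('n) * \<mu> \<le> cutoff R x * g x" if "x \<in> cube 1" for x
      using cutoff_ge_on_unit_cube[OF \<open>2 \<le> R\<close> that] assms(3)[OF that] \<open>0 \<le> \<mu>\<close> cutoff_nonneg
      by (intro mult_mono) auto
    show "0 \<le> cutoff R x * g x" if "x \<in> cube (2 * R)" for x
      using assms(2)[OF that] cutoff_nonneg[of R x] by simp
  qed (use assms in \<open>auto intro!: continuous_intros continuous_on_cutoff\<close>)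
  have "(27/128::real) ^ CARD('n) = ((27/64) * 2 / 4) ^ CARD('n)" by simp
  also have "\<dots> = (27/64) ^ CARD('n) * 2 ^ CARD('n) / 4 ^ CARD('n)"
    by (simp only: power_mult_distrib power_divide)
  finally have "\<mu> * (27/128) ^ CARD('n) / R ^ CARD('n) = (27/64) ^ CARD('n) * \<mu> * 2 ^ CARD('n) / (4 * R) ^ CARD('n)"
    by (simp add: power_mult_distrib)
  also have "\<dots> \<le> I / (4 * R) ^ CARD('n)"
    using I_ge \<open>2 \<le> R\<close> by (intro divide_right_mono) auto
  also have "\<dots> \<le> I / Z"
    using I_ge \<open>0 < Z\<close> \<open>Z \<le> (4 * R) ^ CARD('n)\<close> \<open>0 \<le> \<mu>\<close>
    by (intro divide_left_mono) (auto intro: order_trans[rotated])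
  finally show ?thesis by (simp add: cutoff_average_def I_def Z_def)
qed

lemma cutoff_average_pos:
  fixes g :: "real^'n \<Rightarrow> real"
  assumes "continuous_on (cube (2 * R)) g" and "\<And>x. x \<in> cube (2 * R) \<Longrightarrow> 0 < g x" and "2 \<le> R"
  shows "0 < cutoff_average R g"
  unfolding cutoff_average_def
  using integral_cutoff_mult_pos[OF assms] integral_cutoff_pos[OF assms(3)] by (rule divide_pos_pos)

lemma integral_cutoff_time_deriv_eq:
  fixes f :: "real^'n \<Rightarrow> real \<Rightarrow> real"
  assumes sol: "global_pos_solution p f" and "0 < t" and "0 < R"
  shows "integral (cube (2 * R)) (\<lambda>x. cutoff R x * time_deriv f x t)
           = integral (cube (2 * R)) (\<lambda>x. f x t * (\<Sum>k\<in>UNIV. cutoff_with bump_deriv2 R k x)) / R\<^sup>2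
             + integral (cube (2 * R)) (\<lambda>x. cutoff R x * f x t powr p)"
proof -
  have smooth: "smooth_fun_on (UNIV \<times> {0<..}) (\<lambda>(x, t). f x t)"
    and pos: "\<And>x. 0 < f x t"
    and pde: "\<And>x. deriv (\<lambda>s. f x s) t = laplacian (\<lambda>y. f y t) x + f x t powr p"
    using sol \<open>0 < t\<close> by (auto simp: global_pos_solution_def)
  let ?B = "cube (2 * R) :: (real^'n) set"
  note cont = continuous_on_cutoff continuous_on_cutoff_with[OF continuous_on_bump_deriv2]
    continuous_on_slice[OF smooth \<open>0 < t\<close>] continuous_on_space_deriv2[OF smooth \<open>0 < t\<close>]
  have cont_powr: "continuous_on A (\<lambda>x. f x t powr p)" for A
    using pos by (intro continuous_intros cont) (metis less_irrefl)
  have time_deriv_eq: "time_deriv f x t = (\<Sum>k\<in>UNIV. space_deriv2 f k x t) + f x t powr p" for x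
    using pde[of x] DERIV_imp_deriv[OF has_real_derivative_time[OF smooth \<open>0 < t\<close>, of x]]
      laplacian_eq_sum_space_deriv2[OF smooth \<open>0 < t\<close>, of x] by simp
  have "integral ?B (\<lambda>x. cutoff R x * time_deriv f x t)
      = integral ?B (\<lambda>x. (\<Sum>k\<in>UNIV. cutoff R x * space_deriv2 f k x t) + cutoff R x * f x t powr p)"
    by (simp add: time_deriv_eq algebra_simps sum_distrib_left)
  also have "\<dots> = (\<Sum>k\<in>UNIV. integral ?B (\<lambda>x. cutoff R x * space_deriv2 f k x t))
                  + integral ?B (\<lambda>x. cutoff R x * f x t powr p)"
    by (subst integral_add, (auto intro!: integrable_on_cube continuous_intros cont cont_powr)[2])
       (subst integral_sum, auto intro!: integrable_on_cube continuous_intros cont)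
  also have "(\<Sum>k\<in>UNIV. integral ?B (\<lambda>x. cutoff R x * space_deriv2 f k x t))
      = (\<Sum>k\<in>UNIV. integral ?B (\<lambda>x. f x t * cutoff_with bump_deriv2 R k x)) / R\<^sup>2"
    by (simp add: integral_cutoff_space_deriv2[OF smooth \<open>0 < t\<close> \<open>0 < R\<close>] sum_divide_distrib)
  also have "(\<Sum>k\<in>UNIV. integral ?B (\<lambda>x. f x t * cutoff_with bump_deriv2 R k x))
      = integral ?B (\<lambda>x. f x t * (\<Sum>k\<in>UNIV. cutoff_with bump_deriv2 R k x))"
    unfolding sum_distrib_left
    by (subst integral_sum) (auto intro!: integrable_on_cube continuous_intros cont)
  finally show ?thesis .
qed

lemma integral_cutoff_time_deriv_ge:
  fixes f :: "real^'n \<Rightarrow> real \<Rightarrow> real"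
  assumes sol: "global_pos_solution p f" and "1 < p" and "0 < t" and "2 \<le> R"
  shows "- (10 * real CARD('n) / R\<^sup>2) * integral (cube (2 * R)) (\<lambda>x. cutoff R x * f x t)
           + integral (cube (2 * R)) (cutoff R :: real^'n \<Rightarrow> real) * cutoff_average R (\<lambda>x. f x t) powr p
         \<le> integral (cube (2 * R)) (\<lambda>x. cutoff R x * time_deriv f x t)"
proof -
  have smooth: "smooth_fun_on (UNIV \<times> {0<..}) (\<lambda>(x, t). f x t)" and pos: "\<And>x. 0 < f x t"
    using sol \<open>0 < t\<close> by (auto simp: global_pos_solution_def)
  have "0 < R" using \<open>2 \<le> R\<close> by simp
  let ?B = "cube (2 * R) :: (real^'n) set"
  define Z where "Z = integral ?B (cutoff R)"
  define I where "I = integral ?B (\<lambda>x. cutoff R x * f x t)"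
  note cont = continuous_on_cutoff continuous_on_cutoff_with[OF continuous_on_bump_deriv2]
    continuous_on_slice[OF smooth \<open>0 < t\<close>]
  have cont_powr: "continuous_on A (\<lambda>x. f x t powr p)" for A
    using pos by (intro continuous_intros cont) (metis less_irrefl)
  have "integral ?B (\<lambda>x. - (10 * real CARD('n)) * (cutoff R x * f x t))
      \<le> integral ?B (\<lambda>x. f x t * (\<Sum>k\<in>UNIV. cutoff_with bump_deriv2 R k x))"
  proof (rule integral_le)
    show "- (10 * real CARD('n)) * (cutoff R x * f x t) \<le> f x t * (\<Sum>k\<in>UNIV. cutoff_with bump_deriv2 R k x)" for x
      using mult_left_mono[OF sum_cutoff_with_deriv2_ge[of R x] less_imp_le[OF pos]] by (simp add: algebra_simps)
  qed (auto intro!: integrable_on_cube continuous_intros cont)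
  then have "- (10 * real CARD('n)) * I / R\<^sup>2
      \<le> integral ?B (\<lambda>x. f x t * (\<Sum>k\<in>UNIV. cutoff_with bump_deriv2 R k x)) / R\<^sup>2"
    by (intro divide_right_mono) (simp_all add: I_def)
  moreover have "Z * (I / Z) powr p \<le> integral ?B (\<lambda>x. cutoff R x * f x t powr p)"
    unfolding Z_def I_def
    by (rule jensen_powr_integral)
       (use \<open>1 < p\<close> pos \<open>2 \<le> R\<close> in \<open>auto intro!: integrable_on_cube continuous_intros cont cont_powr
          integral_cutoff_pos integral_cutoff_mult_pos intro: cutoff_nonneg\<close>)
  moreover have "- (10 * real CARD('n) / R\<^sup>2) * I = - (10 * real CARD('n)) * I / R\<^sup>2" by simp
  ultimately show ?thesis
    using integral_cutoff_time_deriv_eq[OF sol \<open>0 < t\<close> \<open>0 < R\<close>]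
    unfolding cutoff_average_def I_def[symmetric] Z_def[symmetric] by linarith
qed

lemma cutoff_average_differential_inequality:
  fixes f :: "real^'n \<Rightarrow> real \<Rightarrow> real"
  assumes sol: "global_pos_solution p f" and "1 < p" and "0 < t" and "2 \<le> R"
  shows "\<exists>D. ((\<lambda>s. cutoff_average R (\<lambda>x. f x s)) has_real_derivative D) (at t) \<and>
           - (10 * real CARD('n) / R\<^sup>2) * cutoff_average R (\<lambda>x. f x t) + cutoff_average R (\<lambda>x. f x t) powr p \<le> D"
proof -
  have smooth: "smooth_fun_on (UNIV \<times> {0<..}) (\<lambda>(x, t). f x t)"
    using sol by (simp add: global_pos_solution_def)
  define Z where "Z = integral (cube (2 * R)) (cutoff R :: real^'n \<Rightarrow> real)"
  define I where "I = integral (cube (2 * R)) (\<lambda>x. cutoff R x * f x t)"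
  define I' where "I' = integral (cube (2 * R)) (\<lambda>x. cutoff R x * time_deriv f x t)"
  define lam where "lam = 10 * real CARD('n) / R\<^sup>2"
  have "0 < Z" unfolding Z_def using \<open>2 \<le> R\<close> by (rule integral_cutoff_pos)
  have "((\<lambda>s. cutoff_average R (\<lambda>x. f x s)) has_real_derivative I' / Z) (at t)"
    unfolding cutoff_average_def Z_def I'_def
    by (intro DERIV_cdivide has_real_derivative_integral_cutoff[OF smooth \<open>0 < t\<close>])
  moreover have "- lam * (I / Z) + (I / Z) powr p \<le> I' / Z"
  proof -
    have "- lam * I + Z * (I / Z) powr p \<le> I'"
      using integral_cutoff_time_deriv_ge[OF assms]
      unfolding cutoff_average_def I_def[symmetric] Z_def[symmetric] I'_def[symmetric] lam_def[symmetric] .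
    from divide_right_mono[OF this less_imp_le[OF \<open>0 < Z\<close>]] \<open>0 < Z\<close>
    show ?thesis by (simp add: diff_divide_distrib)
  qed
  ultimately show ?thesis
    unfolding cutoff_average_def I_def Z_def lam_def by blast
qed

lemma exists_scale_cutoff_average_large:
  fixes f :: "real^'n \<Rightarrow> real \<Rightarrow> real"
  assumes sol: "global_pos_solution p f" and "1 < p" and subcritical: "real CARD('n) * (p - 1) < 2"
  obtains R where "2 \<le> R" and "10 * real CARD('n) / R\<^sup>2 < cutoff_average R (\<lambda>x. f x 1) powr (p - 1)"
proof -
  have smooth: "smooth_fun_on (UNIV \<times> {0<..}) (\<lambda>(x, t). f x t)" and pos: "\<And>x. 0 < f x 1"
    using sol by (auto simp: global_pos_solution_def)
  let ?n = "real CARD('n)"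
  have "cube 1 \<noteq> ({} :: (real^'n) set)" using mem_cube[of "0 :: real^'n" 1] by auto
  then obtain \<mu> where "0 < \<mu>" and \<mu>: "\<And>x. x \<in> cube 1 \<Longrightarrow> \<mu> \<le> f x 1"
    using compact_continuous_pos_imp_lower_bound[of "cube 1" "\<lambda>x. f x 1"] pos
      continuous_on_slice[OF smooth, of 1] by (auto simp: cube_def)
  define \<kappa> where "\<kappa> = \<mu> * (27/128) ^ CARD('n)"
  have "0 < \<kappa>" using \<open>0 < \<mu>\<close> by (simp add: \<kappa>_def)
  obtain R where "2 \<le> R" "0 < R" and scale: "10 * ?n / R\<^sup>2 < \<kappa> powr (p - 1) / R powr (?n * (p - 1))"
    using exists_scale_powr_dominates[of "\<kappa> powr (p - 1)" "?n * (p - 1)" 2 "10 * ?n"] \<open>0 < \<kappa>\<close> subcritical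
    by auto
  have "\<kappa> / R ^ CARD('n) \<le> cutoff_average R (\<lambda>x. f x 1)"
    unfolding \<kappa>_def
    by (rule cutoff_average_ge) (use \<mu> \<open>0 < \<mu>\<close> \<open>2 \<le> R\<close> pos in
        \<open>auto intro: less_imp_le continuous_on_slice[OF smooth]\<close>)
  then have "(\<kappa> / R ^ CARD('n)) powr (p - 1) \<le> cutoff_average R (\<lambda>x. f x 1) powr (p - 1)"
    using \<open>0 < \<kappa>\<close> \<open>0 < R\<close> \<open>1 < p\<close> by (intro powr_mono2) auto
  moreover have "(\<kappa> / R ^ CARD('n)) powr (p - 1) = \<kappa> powr (p - 1) / R powr (?n * (p - 1))"
    using \<open>0 < \<kappa>\<close> \<open>0 < R\<close> by (simp add: powr_divide powr_realpow[symmetric] powr_powr)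
  ultimately show ?thesis using that \<open>2 \<le> R\<close> scale by simp
qed

theorem fujita_no_global_pos_solution:
  fixes f :: "real^'n \<Rightarrow> real \<Rightarrow> real"
  assumes "1 < p" and "real CARD('n) * (p - 1) < 2"
  shows "\<not> global_pos_solution p f"
proof
  assume sol: "global_pos_solution p f"
  then have smooth: "smooth_fun_on (UNIV \<times> {0<..}) (\<lambda>(x, t). f x t)"
    and pos: "\<And>x t. 0 < t \<Longrightarrow> 0 < f x t"
    by (auto simp: global_pos_solution_def)
  obtain R where "2 \<le> R" and start: "10 * real CARD('n) / R\<^sup>2 < cutoff_average R (\<lambda>x. f x 1) powr (p - 1)"
    using exists_scale_cutoff_average_large[OF sol assms] .
  show False
  proof (rule superlinear_differential_inequality_blowup[of 1 "\<lambda>t. cutoff_average R (\<lambda>x. f x t)"])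
    show "\<exists>D. ((\<lambda>t. cutoff_average R (\<lambda>x. f x t)) has_real_derivative D) (at t) \<and>
        - (10 * real CARD('n) / R\<^sup>2) * cutoff_average R (\<lambda>x. f x t) + cutoff_average R (\<lambda>x. f x t) powr p \<le> D"
      if "1 \<le> t" for t
      using that \<open>2 \<le> R\<close> by (intro cutoff_average_differential_inequality[OF sol \<open>1 < p\<close>]) auto
    show "0 < cutoff_average R (\<lambda>x. f x t)" if "1 \<le> t" for t
      using that \<open>2 \<le> R\<close> by (intro cutoff_average_pos continuous_on_slice[OF smooth] pos) auto
  qed (use \<open>1 < p\<close> \<open>2 \<le> R\<close> start in auto)
qed

text \<open>Since n (p - 1) \<le> c < 2 the exponent is subcritical.\<close>

theorem mainTheorem5:
  fixes f :: "real^'n \<Rightarrow> real \<Rightarrow> real" and p c t0 :: real and x0 :: "real^'n"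
  assumes "p > 1"
    and "0 < real CARD('n) * (p - 1)" and "real CARD('n) * (p - 1) \<le> c" and "c < 2"
    and "t0 \<ge> 0"
    and "f x0 t0 \<ge> (4 * real CARD('n) / (2 - c)) powr (1 / (p - 1))"
  shows "\<not> global_pos_solution p f"
  using fujita_no_global_pos_solution[of p f] assms(1,3,4) by simp

end
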